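(* Let $F\in[0,1]$ and $0\le p\le F$, and let $F'_{\max}(p,F)=\max\{F'_{00}(\rho_1\otimes\rho_2):\rho_1,\rho_2\in S_{p,F}\}$. Then $$F'_{\max}(p,F)=1-2p(1-F).$$ Moreover (for $p<1$), with $\tilde F=(F-p)/(1-p)$, $|\psi\rangle=\sqrt{\tilde F}|\Psi_{00}\rangle+\sqrt{1-\tilde F}|\Psi_{11}\rangle$ and $\rho_{\mathrm{opt}}=p|\Psi_{00}\rangle\langle\Psi_{00}|+(1-p)|\psi\rangle\langle\psi|$, one has $\rho_{\mathrm{opt}}\in S_{p,F}$ and $F'_{00}(\rho_{\mathrm{opt}}\otimes\rho_{\mathrm{opt}})=F'_{\max}(p,F)$.
   Context: For a pair of qubit registers $(R,T)$, $|\Psi_{ij}\rangle_{RT}=(I_R\otimes (X^iZ^j)_T)\tfrac1{\sqrt2}(|00\rangle+|11\rangle)_{RT}$, $i,j\in\{0,1\}$ ($X,Z$ Pauli matrices). $S_{p,F}$ is the set of two-qubit density operators $\rho$ such that $\rho=p|\Psi_{00}\rangle\langle\Psi_{00}|+(1-p)\sigma$ for some density operator $\sigma$ and $\langle\Psi_{00}|\rho|\Psi_{00}\rangle=F$. Postselected swap: $\rho_1$ acts on registers $(A_1,B_1)$ and $\rho_2$ on $(A_2,B_2)$ (Bell states of each $\rho_k$, including $|\psi\rangle$ above, are taken in the ordering $(A_k,B_k)$); a Bell-state measurement on $(A_1,A_2)$ gives outcome $ij$ with probability $p'_{ij}(\rho_1\otimes\rho_2)=\mathrm{Tr}[|\Psi_{ij}\rangle\langle\Psi_{ij}|_{A_1A_2}\rho_1\otimes\rho_2]$,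 and the postselected end-to-end fidelity (after the Pauli correction $Z^jX^i$ on $B_2$) is $F'_{ij}(\rho_1\otimes\rho_2)=\frac{1}{p'_{ij}}\mathrm{Tr}[|\Psi_{ij}\rangle\langle\Psi_{ij}|_{B_1B_2}|\Psi_{ij}\rangle\langle\Psi_{ij}|_{A_1A_2}\rho_1\otimes\rho_2]$. *)

theory Defs
  imports Complex_Main
begin

(* A qubit register has basis indexed by bool (False = |0>, True = |1>).
   A pair of registers (R,T) has basis indexed by bool \<times> bool, first component = R. *)

type_synonym qvec = "bool \<times> bool \<Rightarrow> complex"
type_synonym qop = "bool \<times> bool \<Rightarrow> bool \<times> bool \<Rightarrow> complex"

definition pauli_X :: "bool \<Rightarrow> bool \<Rightarrow> complex" where
  "pauli_X a b = (if a \<noteq> b then 1 else 0)"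

definition pauli_Z :: "bool \<Rightarrow> bool \<Rightarrow> complex" where
  "pauli_Z a b = (if a = b then (if a then -1 else 1) else 0)"

definition id2 :: "bool \<Rightarrow> bool \<Rightarrow> complex" where
  "id2 a b = (if a = b then 1 else 0)"

definition mmult2 :: "(bool \<Rightarrow> bool \<Rightarrow> complex) \<Rightarrow> (bool \<Rightarrow> bool \<Rightarrow> complex) \<Rightarrow> bool \<Rightarrow> bool \<Rightarrow> complex" where
  "mmult2 A B a c = (\<Sum>b\<in>UNIV. A a b * B b c)"

definition XZpow :: "nat \<Rightarrow> nat \<Rightarrow> bool \<Rightarrow> bool \<Rightarrow> complex" where
  "XZpow i j = mmult2 (if i = 1 then pauli_X else id2) (if j = 1 then pauli_Z else id2)"

definition phi_plus :: qvec where
  "phi_plus = (\<lambda>(r, t). if r = t then complex_of_real (1 / sqrt 2) else 0)"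

definition bell :: "nat \<Rightarrow> nat \<Rightarrow> qvec" where
  "bell i j = (\<lambda>(r, t). \<Sum>t'\<in>UNIV. XZpow i j t t' * phi_plus (r, t'))"

definition proj :: "qvec \<Rightarrow> qop" where
  "proj v x y = v x * cnj (v y)"

definition expval :: "qop \<Rightarrow> qvec \<Rightarrow> complex" where
  "expval A v = (\<Sum>x\<in>UNIV. \<Sum>y\<in>UNIV. cnj (v x) * A x y * v y)"

definition trace_op :: "qop \<Rightarrow> complex" where
  "trace_op A = (\<Sum>x\<in>UNIV. A x x)"

definition psd :: "qop \<Rightarrow> bool" where
  "psd A \<longleftrightarrow> (\<forall>v. Im (expval A v) = 0 \<and> Re (expval A v) \<ge> 0)"

definition density_op :: "qop \<Rightarrow> bool" where
  "density_op A \<longleftrightarrow> psd A \<and> trace_op A = 1"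

definition S_set :: "real \<Rightarrow> real \<Rightarrow> qop set" where
  "S_set p F = {\<rho>. density_op \<rho> \<and>
      (\<exists>\<sigma>. density_op \<sigma> \<and>
            \<rho> = (\<lambda>x y. complex_of_real p * proj (bell 0 0) x y + complex_of_real (1 - p) * \<sigma> x y)) \<and>
      expval \<rho> (bell 0 0) = complex_of_real F}"

(* rho1 acts on (A1,B1) indexed (a1,b1), rho2 on (A2,B2) indexed (a2,b2).
   p'_ij = Tr[ |Psi_ij><Psi_ij|_{A1A2} (rho1 \<otimes> rho2) ]  (identity on B1,B2) *)
definition swap_prob :: "nat \<Rightarrow> nat \<Rightarrow> qop \<Rightarrow> qop \<Rightarrow> complex" where
  "swap_prob i j \<rho>1 \<rho>2 =
     (\<Sum>a1\<in>UNIV. \<Sum>a2\<in>UNIV. \<Sum>a1'\<in>UNIV. \<Sum>a2'\<in>UNIV. \<Sum>b1\<in>UNIV. \<Sum>b2\<in>UNIV.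
        proj (bell i j) (a1, a2) (a1', a2') * \<rho>1 (a1', b1) (a1, b1) * \<rho>2 (a2', b2) (a2, b2))"

(* Tr[ |Psi_ij><Psi_ij|_{B1B2} |Psi_ij><Psi_ij|_{A1A2} (rho1 \<otimes> rho2) ] *)
definition swap_num :: "nat \<Rightarrow> nat \<Rightarrow> qop \<Rightarrow> qop \<Rightarrow> complex" where
  "swap_num i j \<rho>1 \<rho>2 =
     (\<Sum>a1\<in>UNIV. \<Sum>a2\<in>UNIV. \<Sum>a1'\<in>UNIV. \<Sum>a2'\<in>UNIV.
      \<Sum>b1\<in>UNIV. \<Sum>b2\<in>UNIV. \<Sum>b1'\<in>UNIV. \<Sum>b2'\<in>UNIV.
        proj (bell i j) (a1, a2) (a1', a2') * proj (bell i j) (b1, b2) (b1', b2') *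
        \<rho>1 (a1', b1') (a1, b1) * \<rho>2 (a2', b2') (a2, b2))"

definition swap_fid :: "nat \<Rightarrow> nat \<Rightarrow> qop \<Rightarrow> qop \<Rightarrow> complex" where
  "swap_fid i j \<rho>1 \<rho>2 = swap_num i j \<rho>1 \<rho>2 / swap_prob i j \<rho>1 \<rho>2"

end

theory Submission
  imports Defs "HOL-Analysis.L2_Norm"
begin

(* Write \<rho>k = p \<Phi> + (1 - p) \<sigma>k with \<Phi> = |\<Psi>00><\<Psi>00|. For outcome 00 the success
   probability P and the unnormalised fidelity N are bilinear in (\<rho>1, \<rho>2), and expanding gives
   P = p^2/4 + p(1-p)/2 + (1-p)^2 q and N = p^2/4 + p(F-p)/2 + (1-p)^2 n, where q and n are the
   same quantities for (\<sigma>1, \<sigma>2). Splitting \<sigma>1 and \<sigma>2 into rank-one terms shows 0 <= n <= q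
   and, by Cauchy-Schwarz, n <= 1/4. Then
     (1 - 2p(1-F)) P - N = (1-p)^2 ((q - n) + p(1-F)(1/2 - 2q)) >= 0,
   since p(1-F) <= F(1-F) <= 1/4. Equality holds for \<sigma> = |\<psi>><\<psi>| with \<psi> in the span of
   \<Psi>00 and \<Psi>11, where n = q = 1/4. *)

definition quad_form :: "('a::finite \<Rightarrow> 'a \<Rightarrow> complex) \<Rightarrow> ('a \<Rightarrow> complex) \<Rightarrow> complex" where
  "quad_form A v = (\<Sum>x\<in>UNIV. \<Sum>y\<in>UNIV. cnj (v x) * A x y * v y)"

definition pos_semidef :: "('a::finite \<Rightarrow> 'a \<Rightarrow> complex) \<Rightarrow> bool" where
  "pos_semidef A \<longleftrightarrow> (\<forall>v. Im (quad_form A v) = 0 \<and> Re (quad_form A v) \<ge> 0)"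

lemma psd_iff_pos_semidef: "psd A \<longleftrightarrow> pos_semidef A"
  unfolding psd_def pos_semidef_def expval_def quad_form_def ..

lemmas delta_simps = if_distrib[of "\<lambda>u. u * _"] if_distrib[of "\<lambda>u. _ * u"] if_distrib[of cnj]

lemma quad_form_delta: "quad_form A (\<lambda>z. if z = x then c else 0) = cnj c * A x x * c"
  by (simp add: quad_form_def delta_simps cong: if_cong)

lemma quad_form_two_deltas:
  "quad_form A (\<lambda>z. (if z = x then c else 0) + (if z = y then d else 0))
     = cnj c * A x x * c + cnj c * A x y * d + cnj d * A y x * c + cnj d * A y y * d"
  by (simp add: quad_form_def distrib_left distrib_right sum.distrib delta_simps cong: if_cong)

lemma quad_form_eq_sum_inner: "quad_form A v = (\<Sum>x\<in>UNIV. cnj (v x) * (\<Sum>y\<in>UNIV. A x y * v y))"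
  unfolding quad_form_def by (simp add: sum_distrib_left mult.assoc)

lemma quad_form_add_delta:
  "quad_form A (\<lambda>z. v z + (if z = a then c else 0)) = quad_form A v + cnj c * A a a * c
     + (\<Sum>x\<in>UNIV. cnj (v x) * A x a) * c + cnj c * (\<Sum>y\<in>UNIV. A a y * v y)"
proof -
  define T where "T x = (\<Sum>y\<in>UNIV. A x y * v y)" for x
  have "(\<Sum>y\<in>UNIV. A x y * (v y + (if y = a then c else 0))) = T x + A x a * c" for x
    unfolding T_def by (simp add: distrib_left sum.distrib delta_simps cong: if_cong)
  then show ?thesis
    unfolding quad_form_eq_sum_inner T_def[symmetric]
    by (simp add: algebra_simps sum.distrib delta_simps sum_distrib_left cong: if_cong)
qed

lemma pos_semidef_diag:
  assumes "pos_semidef A"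
  shows "Im (A x x) = 0" "Re (A x x) \<ge> 0"
  using assms[unfolded pos_semidef_def, rule_format, of "\<lambda>z. if z = x then 1 else 0"]
  by (simp_all add: quad_form_delta)

lemma pos_semidef_hermitian:
  assumes "pos_semidef A"
  shows "A x y = cnj (A y x)"
proof -
  have "Im (quad_form A (\<lambda>z. (if z = x then 1 else 0) + (if z = y then c else 0))) = 0" for c
    using assms by (simp add: pos_semidef_def)
  from this[of 1] this[of \<i>] pos_semidef_diag(1)[OF assms]
  have "Im (A x y + A y x) = 0" "Re (A x y - A y x) = 0"
    by (simp_all add: quad_form_two_deltas)
  then show ?thesis by (simp add: complex_eq_iff)
qed

lemma pos_semidef_zero_diag_row:
  assumes psd: "pos_semidef A" and "A a a = 0"
  shows "A a y = 0"
proof (rule ccontr)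
  assume "A a y \<noteq> 0"
  define u where "u = A a y"
  define s where "s = (Re (A y y) + 1) / (cmod u)\<^sup>2"
  have s_u: "s * (cmod u)\<^sup>2 = Re (A y y) + 1"
    using \<open>A a y \<noteq> 0\<close> unfolding s_def u_def by simp
  have "quad_form A (\<lambda>z. (if z = a then - of_real s * u else 0) + (if z = y then 1 else 0))
      = A y y - of_real (2 * (s * (cmod u)\<^sup>2))"
    using \<open>A a a = 0\<close> pos_semidef_hermitian[OF psd, of y a] complex_norm_square[of u]
    by (simp add: quad_form_two_deltas u_def algebra_simps)
  then have "Re (quad_form A (\<lambda>z. (if z = a then - of_real s * u else 0) + (if z = y then 1 else 0)))
      = - Re (A y y) - 2"
    unfolding s_u by simp
  moreover have "0 \<le> Re (quad_form A (\<lambda>z. (if z = a then - of_real s * u else 0) + (if z = y then 1 else 0)))"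
    using psd unfolding pos_semidef_def by blast
  ultimately show False
    using pos_semidef_diag(2)[OF psd, of y] by linarith
qed

lemma pos_semidef_schur_complement:
  assumes psd: "pos_semidef A" and "A a a \<noteq> 0"
  shows "pos_semidef (\<lambda>x y. A x y - A x a * A a y / A a a)"
  unfolding pos_semidef_def
proof
  fix v
  define u where "u = (\<Sum>y\<in>UNIV. A a y * v y)"
  have col: "(\<Sum>x\<in>UNIV. cnj (v x) * A x a) = cnj u"
    unfolding u_def by (simp add: pos_semidef_hermitian[OF psd, of _ a] mult.commute)
  have real_diag: "cnj (A a a) = A a a"
    using pos_semidef_diag(1)[OF psd] by (simp add: complex_eq_iff)
  have "quad_form (\<lambda>x y. A x y - A x a * A a y / A a a) v
      = quad_form A v - (\<Sum>x\<in>UNIV. cnj (v x) * A x a) * u / A a a"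
    unfolding quad_form_def u_def
    by (simp add: algebra_simps sum_subtractf sum_distrib_left sum_distrib_right sum_divide_distrib)
  also have "\<dots> = quad_form A (\<lambda>z. v z + (if z = a then - u / A a a else 0))"
    unfolding quad_form_add_delta col u_def[symmetric] using \<open>A a a \<noteq> 0\<close> real_diag
    by (simp add: field_simps)
  finally show "Im (quad_form (\<lambda>x y. A x y - A x a * A a y / A a a) v) = 0 \<and>
      Re (quad_form (\<lambda>x y. A x y - A x a * A a y / A a a) v) \<ge> 0"
    using psd unfolding pos_semidef_def by simp
qed

(* Cholesky-type elimination of one basis vector a: if A a a = 0, positivity kills row and
   column a; otherwise the Schur complement of A a a is positive semidefinite and vanishes
   outside S, and A is that complement plus a rank-one term. *)
lemma pos_semidef_rank_one_sum_supported:
  assumes "finite S" "pos_semidef A" "\<And>x y. x \<notin> S \<or> y \<notin> S \<Longrightarrow> A x y = 0"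
  shows "\<exists>(n::nat) f. \<forall>x y. A x y = (\<Sum>j<n. f j x * cnj (f j y))"
  using assms
proof (induction S arbitrary: A rule: finite_induct)
  case empty
  show ?case by (rule exI[where x="0::nat"]) (simp add: empty.prems(2))
next
  case (insert a S)
  note psd = insert.prems(1)
  show ?case
  proof (cases "A a a = 0")
    case True
    then have "A a y = 0" "A y a = 0" for y
      using pos_semidef_zero_diag_row[OF psd] pos_semidef_hermitian[OF psd, of y a] by auto
    then show ?thesis
      using insert.IH[OF psd] insert.prems(2) by (metis insertE)
  next
    case False
    define B where "B x y = A x y - A x a * A a y / A a a" for x y
    have "pos_semidef B"
      unfolding B_def[abs_def] using pos_semidef_schur_complement[OF psd False] .
    moreover have "B x y = 0" if "x \<notin> S \<or> y \<notin> S" for x y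
      using that insert.prems(2)[of x y] insert.prems(2)[of x a] insert.prems(2)[of a y] False
      unfolding B_def by (cases "x = a"; cases "y = a") auto
    ultimately obtain n :: nat and f where f: "\<And>x y. B x y = (\<Sum>j<n. f j x * cnj (f j y))"
      using insert.IH by blast
    define d where "d = sqrt (Re (A a a))"
    define g where "g = f(n := \<lambda>x. A x a / of_real d)"
    have "A a a = of_real (d\<^sup>2)"
      using pos_semidef_diag[OF psd, of a] unfolding d_def by (simp add: complex_eq_iff)
    then have "A x a * A a y / A a a = g n x * cnj (g n y)" for x y
      using pos_semidef_hermitian[OF psd, of a y] False
      by (simp add: g_def power2_eq_square)
    then have decomp: "A x y = B x y + g n x * cnj (g n y)" for x y
      unfolding B_def by simp
    have "A x y = (\<Sum>j<Suc n. g j x * cnj (g j y))" for x y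
      unfolding decomp[of x y] f by (simp add: g_def)
    then show ?thesis by blast
  qed
qed

lemma pos_semidef_rank_one_sum:
  fixes A :: "'a::finite \<Rightarrow> 'a \<Rightarrow> complex"
  assumes "pos_semidef A"
  shows "\<exists>(n::nat) f. \<forall>x y. A x y = (\<Sum>j<n. f j x * cnj (f j y))"
  using pos_semidef_rank_one_sum_supported[of UNIV A] assms by simp

lemma cmod_sum_mult_squared_le:
  fixes f g :: "'a \<Rightarrow> complex"
  shows "(cmod (\<Sum>x\<in>A. f x * g x))\<^sup>2 \<le> (\<Sum>x\<in>A. (cmod (f x))\<^sup>2) * (\<Sum>x\<in>A. (cmod (g x))\<^sup>2)"
proof -
  have "cmod (\<Sum>x\<in>A. f x * g x) \<le> (\<Sum>x\<in>A. cmod (f x) * cmod (g x))"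
    unfolding norm_mult[symmetric] by (rule norm_sum)
  also have "\<dots> \<le> L2_set (\<lambda>x. cmod (f x)) A * L2_set (\<lambda>x. cmod (g x)) A"
    using L2_set_mult_ineq[of "\<lambda>x. cmod (f x)" "\<lambda>x. cmod (g x)" A] by simp
  finally have "(cmod (\<Sum>x\<in>A. f x * g x))\<^sup>2
      \<le> (L2_set (\<lambda>x. cmod (f x)) A * L2_set (\<lambda>x. cmod (g x)) A)\<^sup>2"
    by (simp add: power_mono)
  then show ?thesis
    by (simp add: L2_set_def power_mult_distrib sum_nonneg)
qed

lemma sum_UNIV_pair: "(\<Sum>x\<in>UNIV. f x) = (\<Sum>b\<in>UNIV. \<Sum>a\<in>UNIV. f (a, b))"
  unfolding UNIV_Times_UNIV[symmetric] sum.cartesian_product' by (rule sum.swap)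

lemma sum_sum_sum_swap:
  "(\<Sum>x\<in>X. \<Sum>y\<in>Y. \<Sum>j\<in>J. h j x y) = (\<Sum>j\<in>J. \<Sum>x\<in>X. \<Sum>y\<in>Y. h j x y)"
proof -
  have "(\<Sum>x\<in>X. \<Sum>y\<in>Y. \<Sum>j\<in>J. h j x y) = (\<Sum>x\<in>X. \<Sum>j\<in>J. \<Sum>y\<in>Y. h j x y)"
    by (rule sum.cong[OF refl sum.swap])
  also have "\<dots> = (\<Sum>j\<in>J. \<Sum>x\<in>X. \<Sum>y\<in>Y. h j x y)"
    by (rule sum.swap)
  finally show ?thesis .
qed

lemma bell_00_apply: "bell 0 0 (r, t) = (if r = t then of_real (1 / sqrt 2) else 0)"
  by (simp add: bell_def XZpow_def mmult2_def id2_def phi_plus_def UNIV_bool)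

lemma proj_bell_00_apply: "proj (bell 0 0) (a, b) (a', b') = (if a = b \<and> a' = b' then 1 / 2 else 0)"
  by (simp add: proj_def bell_00_apply flip: of_real_mult)

definition ptrace2 :: "qop \<Rightarrow> bool \<Rightarrow> bool \<Rightarrow> complex" where
  "ptrace2 \<rho> a a' = (\<Sum>b\<in>UNIV. \<rho> (a, b) (a', b))"

lemma swap_num_00_eq: "swap_num 0 0 \<rho>1 \<rho>2 = (\<Sum>x\<in>UNIV. \<Sum>y\<in>UNIV. \<rho>1 x y * \<rho>2 x y) / 4"
  unfolding swap_num_def
  by (simp add: proj_bell_00_apply UNIV_bool UNIV_Times_UNIV[symmetric] algebra_simps)

lemma swap_prob_00_eq:
  "swap_prob 0 0 \<rho>1 \<rho>2 = (\<Sum>a\<in>UNIV. \<Sum>a'\<in>UNIV. ptrace2 \<rho>1 a a' * ptrace2 \<rho>2 a a') / 2"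
  unfolding swap_prob_def ptrace2_def by (simp add: proj_bell_00_apply UNIV_bool algebra_simps)

lemma expval_proj: "expval (proj v) w = of_real ((cmod (\<Sum>x\<in>UNIV. cnj (w x) * v x))\<^sup>2)"
  unfolding complex_norm_square expval_def proj_def by (simp add: sum_product algebra_simps)

lemma psd_proj: "psd (proj v)"
  unfolding psd_def expval_proj by simp

lemma trace_op_proj: "trace_op (proj v) = of_real (\<Sum>x\<in>UNIV. (cmod (v x))\<^sup>2)"
  unfolding trace_op_def proj_def by (simp add: complex_norm_square[unfolded of_real_power])

lemma swap_num_00_proj:
  "swap_num 0 0 (proj f) (proj g) = of_real ((cmod (\<Sum>x\<in>UNIV. f x * g x))\<^sup>2 / 4)"
  unfolding swap_num_00_eq proj_def
  by (simp add: complex_norm_square[unfolded of_real_power] sum_product algebra_simps)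

lemma swap_prob_00_proj:
  "swap_prob 0 0 (proj f) (proj g)
   = of_real ((\<Sum>b\<in>UNIV. \<Sum>b'\<in>UNIV. (cmod (\<Sum>a\<in>UNIV. f (a, b) * g (a, b')))\<^sup>2) / 2)"
  unfolding swap_prob_00_eq proj_def ptrace2_def
  by (simp add: complex_norm_square[unfolded of_real_power] UNIV_bool algebra_simps)

lemma swap_num_le_prob_00_proj:
  fixes f g :: qvec
  shows "(cmod (\<Sum>x\<in>UNIV. f x * g x))\<^sup>2 / 4
    \<le> (\<Sum>b\<in>UNIV. \<Sum>b'\<in>UNIV. (cmod (\<Sum>a\<in>UNIV. f (a, b) * g (a, b')))\<^sup>2) / 2"
proof -
  define M where "M b b' = (\<Sum>a\<in>UNIV. f (a, b) * g (a, b'))" for b b'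
  have "(cmod (\<Sum>x\<in>UNIV. f x * g x))\<^sup>2 = (cmod (\<Sum>b\<in>UNIV. 1 * M b b))\<^sup>2"
    unfolding M_def sum_UNIV_pair[of "\<lambda>x. f x * g x"] by simp
  also have "\<dots> \<le> 2 * (\<Sum>b\<in>UNIV. (cmod (M b b))\<^sup>2)"
    using cmod_sum_mult_squared_le[of "\<lambda>_. 1" "\<lambda>b. M b b" UNIV] by simp
  also have "\<dots> \<le> 2 * (\<Sum>b\<in>UNIV. \<Sum>b'\<in>UNIV. (cmod (M b b'))\<^sup>2)"
    by (intro mult_left_mono sum_mono member_le_sum) auto
  finally show ?thesis unfolding M_def by linarith
qed

lemma swap_num_00_commute: "swap_num 0 0 \<rho>1 \<rho>2 = swap_num 0 0 \<rho>2 \<rho>1"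
  unfolding swap_num_00_eq by (simp add: mult.commute)

lemma swap_num_00_sum_left:
  "swap_num 0 0 (\<lambda>x y. \<Sum>j\<in>J. A j x y) \<rho> = (\<Sum>j\<in>J. swap_num 0 0 (A j) \<rho>)"
  unfolding swap_num_00_eq sum_distrib_right sum_divide_distrib by (rule sum_sum_sum_swap)

lemma swap_num_00_sum:
  "swap_num 0 0 (\<lambda>x y. \<Sum>j\<in>J. A j x y) (\<lambda>x y. \<Sum>k\<in>K. B k x y)
   = (\<Sum>j\<in>J. \<Sum>k\<in>K. swap_num 0 0 (A j) (B k))"
proof -
  have "swap_num 0 0 (A j) (\<lambda>x y. \<Sum>k\<in>K. B k x y) = (\<Sum>k\<in>K. swap_num 0 0 (A j) (B k))" for j
    by (simp only: swap_num_00_commute[of "A j"] swap_num_00_sum_left)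
  then show ?thesis by (simp only: swap_num_00_sum_left)
qed

lemma ptrace2_sum: "ptrace2 (\<lambda>x y. \<Sum>j\<in>J. A j x y) a a' = (\<Sum>j\<in>J. ptrace2 (A j) a a')"
  unfolding ptrace2_def by (rule sum.swap)

lemma swap_prob_00_commute: "swap_prob 0 0 \<rho>1 \<rho>2 = swap_prob 0 0 \<rho>2 \<rho>1"
  unfolding swap_prob_00_eq by (simp add: mult.commute)

lemma swap_prob_00_sum_left:
  "swap_prob 0 0 (\<lambda>x y. \<Sum>j\<in>J. A j x y) \<rho> = (\<Sum>j\<in>J. swap_prob 0 0 (A j) \<rho>)"
  unfolding swap_prob_00_eq ptrace2_sum sum_distrib_right sum_divide_distrib
  by (rule sum_sum_sum_swap)

lemma swap_prob_00_sum:
  "swap_prob 0 0 (\<lambda>x y. \<Sum>j\<in>J. A j x y) (\<lambda>x y. \<Sum>k\<in>K. B k x y)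
   = (\<Sum>j\<in>J. \<Sum>k\<in>K. swap_prob 0 0 (A j) (B k))"
proof -
  have "swap_prob 0 0 (A j) (\<lambda>x y. \<Sum>k\<in>K. B k x y) = (\<Sum>k\<in>K. swap_prob 0 0 (A j) (B k))" for j
    by (simp only: swap_prob_00_commute[of "A j"] swap_prob_00_sum_left)
  then show ?thesis by (simp only: swap_prob_00_sum_left)
qed

lemma density_op_rank_one_sum:
  assumes "density_op \<sigma>"
  obtains n :: nat and f where "\<sigma> = (\<lambda>x y. \<Sum>j<n. proj (f j) x y)"
    and "(\<Sum>j<n. \<Sum>x\<in>UNIV. (cmod (f j x))\<^sup>2) = 1"
proof -
  obtain n :: nat and f where f: "\<And>x y. \<sigma> x y = (\<Sum>j<n. f j x * cnj (f j y))"
    using assms pos_semidef_rank_one_sum unfolding density_op_def psd_iff_pos_semidef by blast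
  then have \<sigma>: "\<sigma> = (\<lambda>x y. \<Sum>j<n. proj (f j) x y)"
    by (simp add: fun_eq_iff proj_def)
  have "of_real (\<Sum>j<n. \<Sum>x\<in>UNIV. (cmod (f j x))\<^sup>2) = (\<Sum>j<n. trace_op (proj (f j)))"
    by (simp add: trace_op_proj)
  also have "\<dots> = trace_op \<sigma>"
    unfolding \<sigma> trace_op_def by (rule sum.swap)
  also have "\<dots> = 1"
    using assms by (simp add: density_op_def)
  finally have "(\<Sum>j<n. \<Sum>x\<in>UNIV. (cmod (f j x))\<^sup>2) = 1"
    by (simp only: of_real_eq_1_iff)
  with \<sigma> show ?thesis by (rule that)
qed

lemma swap_00_density_bounds:
  assumes "density_op \<sigma>1" "density_op \<sigma>2"
  obtains q n where "swap_prob 0 0 \<sigma>1 \<sigma>2 = of_real q" "swap_num 0 0 \<sigma>1 \<sigma>2 = of_real n"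
    and "0 \<le> n" "n \<le> q" "n \<le> 1 / 4"
proof -
  obtain m :: nat and f where \<sigma>1: "\<sigma>1 = (\<lambda>x y. \<Sum>j<m. proj (f j) x y)"
    and tr1: "(\<Sum>j<m. \<Sum>x\<in>UNIV. (cmod (f j x))\<^sup>2) = 1"
    using density_op_rank_one_sum[OF assms(1)] by blast
  obtain l :: nat and g where \<sigma>2: "\<sigma>2 = (\<lambda>x y. \<Sum>k<l. proj (g k) x y)"
    and tr2: "(\<Sum>k<l. \<Sum>x\<in>UNIV. (cmod (g k x))\<^sup>2) = 1"
    using density_op_rank_one_sum[OF assms(2)] by blast
  define nn where "nn j k = (cmod (\<Sum>x\<in>UNIV. f j x * g k x))\<^sup>2 / 4" for j k
  define qq where "qq j k = (\<Sum>b\<in>UNIV. \<Sum>b'\<in>UNIV. (cmod (\<Sum>a\<in>UNIV. f j (a, b) * g k (a, b')))\<^sup>2) / 2"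
    for j k
  have "swap_num 0 0 \<sigma>1 \<sigma>2 = of_real (\<Sum>j<m. \<Sum>k<l. nn j k)"
    unfolding \<sigma>1 \<sigma>2 swap_num_00_sum swap_num_00_proj nn_def by simp
  moreover have "swap_prob 0 0 \<sigma>1 \<sigma>2 = of_real (\<Sum>j<m. \<Sum>k<l. qq j k)"
    unfolding \<sigma>1 \<sigma>2 swap_prob_00_sum swap_prob_00_proj qq_def by simp
  moreover have "0 \<le> (\<Sum>j<m. \<Sum>k<l. nn j k)"
    unfolding nn_def by (intro sum_nonneg) simp
  moreover have "(\<Sum>j<m. \<Sum>k<l. nn j k) \<le> (\<Sum>j<m. \<Sum>k<l. qq j k)"
    unfolding nn_def qq_def by (intro sum_mono swap_num_le_prob_00_proj)
  moreover have "(\<Sum>j<m. \<Sum>k<l. nn j k) \<le> 1 / 4"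
  proof -
    have "(\<Sum>j<m. \<Sum>k<l. nn j k)
        \<le> (\<Sum>j<m. \<Sum>k<l. (\<Sum>x\<in>UNIV. (cmod (f j x))\<^sup>2) * (\<Sum>x\<in>UNIV. (cmod (g k x))\<^sup>2) / 4)"
      unfolding nn_def by (intro sum_mono divide_right_mono cmod_sum_mult_squared_le) simp
    also have "\<dots> = 1 / 4"
      using tr1 tr2 by (simp add: sum_product[symmetric] sum_divide_distrib[symmetric])
    finally show ?thesis .
  qed
  ultimately show ?thesis
    using that by blast
qed

definition phi_mixture :: "real \<Rightarrow> qop \<Rightarrow> qop" where
  "phi_mixture p \<sigma> = (\<lambda>x y. of_real p * proj (bell 0 0) x y + of_real (1 - p) * \<sigma> x y)"

lemma cnj_bell_00 [simp]: "cnj (bell 0 0 x) = bell 0 0 x"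
  by (cases x) (simp add: bell_00_apply)

lemma bell_00_inner_self: "(\<Sum>x\<in>UNIV. cnj (bell 0 0 x) * bell 0 0 x) = 1"
  by (simp add: bell_00_apply UNIV_bool UNIV_Times_UNIV[symmetric] flip: of_real_mult)

lemma sum_proj_bell_00_mult: "(\<Sum>x\<in>UNIV. \<Sum>y\<in>UNIV. proj (bell 0 0) x y * \<sigma> x y) = expval \<sigma> (bell 0 0)"
  unfolding expval_def proj_def by (simp add: algebra_simps)

lemma expval_bell_00_proj_bell_00: "expval (proj (bell 0 0)) (bell 0 0) = 1"
  unfolding expval_proj bell_00_inner_self by simp

lemma trace_op_proj_bell_00: "trace_op (proj (bell 0 0)) = 1"
  using bell_00_inner_self by (simp add: trace_op_def proj_def mult.commute)

lemma ptrace2_proj_bell_00: "ptrace2 (proj (bell 0 0)) a a' = (if a = a' then 1 / 2 else 0)"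
  unfolding ptrace2_def by (simp add: proj_bell_00_apply UNIV_bool)

lemma sum_ptrace2_proj_bell_00_mult:
  "(\<Sum>a\<in>UNIV. \<Sum>a'\<in>UNIV. ptrace2 (proj (bell 0 0)) a a' * ptrace2 \<sigma> a a') = trace_op \<sigma> / 2"
  unfolding ptrace2_proj_bell_00
  by (simp add: ptrace2_def trace_op_def UNIV_bool UNIV_Times_UNIV[symmetric] algebra_simps)

lemma expval_lincomb: "expval (\<lambda>x y. a * A x y + c * B x y) v = a * expval A v + c * expval B v"
  unfolding expval_def by (simp add: sum.distrib sum_distrib_left algebra_simps)

lemma trace_op_lincomb: "trace_op (\<lambda>x y. a * A x y + c * B x y) = a * trace_op A + c * trace_op B"
  unfolding trace_op_def by (simp add: sum.distrib sum_distrib_left)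

lemma ptrace2_lincomb:
  "ptrace2 (\<lambda>x y. a * A x y + c * B x y) u w = a * ptrace2 A u w + c * ptrace2 B u w"
  unfolding ptrace2_def by (simp add: sum.distrib sum_distrib_left)

lemma expval_phi_mixture:
  "expval (phi_mixture p \<sigma>) (bell 0 0) = of_real p + of_real (1 - p) * expval \<sigma> (bell 0 0)"
  unfolding phi_mixture_def expval_lincomb expval_bell_00_proj_bell_00 by simp

lemma trace_op_phi_mixture: "trace_op (phi_mixture p \<sigma>) = of_real p + of_real (1 - p) * trace_op \<sigma>"
  unfolding phi_mixture_def trace_op_lincomb trace_op_proj_bell_00 by simp

lemma psd_phi_mixture:
  assumes "psd \<sigma>" "0 \<le> p" "p \<le> 1"
  shows "psd (phi_mixture p \<sigma>)"
  using assms psd_proj[of "bell 0 0"] unfolding psd_def phi_mixture_def expval_lincomb by simp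

lemma swap_num_00_bell_00_lincomb:
  "swap_num 0 0 (\<lambda>x y. a * proj (bell 0 0) x y + c * \<sigma>1 x y)
                (\<lambda>x y. a * proj (bell 0 0) x y + c * \<sigma>2 x y)
   = a * a / 4 + a * c / 4 * (expval \<sigma>1 (bell 0 0) + expval \<sigma>2 (bell 0 0))
     + c * c * swap_num 0 0 \<sigma>1 \<sigma>2"
proof -
  let ?\<Phi> = "proj (bell 0 0)"
  have "(\<Sum>x\<in>UNIV. \<Sum>y\<in>UNIV. (a * ?\<Phi> x y + c * \<sigma>1 x y) * (a * ?\<Phi> x y + c * \<sigma>2 x y))
     = a * a * (\<Sum>x\<in>UNIV. \<Sum>y\<in>UNIV. ?\<Phi> x y * ?\<Phi> x y) + a * c * (\<Sum>x\<in>UNIV. \<Sum>y\<in>UNIV. ?\<Phi> x y * \<sigma>2 x y)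
       + a * c * (\<Sum>x\<in>UNIV. \<Sum>y\<in>UNIV. ?\<Phi> x y * \<sigma>1 x y) + c * c * (\<Sum>x\<in>UNIV. \<Sum>y\<in>UNIV. \<sigma>1 x y * \<sigma>2 x y)"
    by (simp add: sum.distrib sum_distrib_left algebra_simps)
  then show ?thesis
    unfolding swap_num_00_eq sum_proj_bell_00_mult expval_bell_00_proj_bell_00
    by (simp add: algebra_simps)
qed

lemma swap_prob_00_bell_00_lincomb:
  "swap_prob 0 0 (\<lambda>x y. a * proj (bell 0 0) x y + c * \<sigma>1 x y)
                 (\<lambda>x y. a * proj (bell 0 0) x y + c * \<sigma>2 x y)
   = a * a / 4 + a * c / 4 * (trace_op \<sigma>1 + trace_op \<sigma>2) + c * c * swap_prob 0 0 \<sigma>1 \<sigma>2"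
proof -
  let ?\<Phi> = "ptrace2 (proj (bell 0 0))"
  have "(\<Sum>u\<in>UNIV. \<Sum>w\<in>UNIV. (a * ?\<Phi> u w + c * ptrace2 \<sigma>1 u w) * (a * ?\<Phi> u w + c * ptrace2 \<sigma>2 u w))
     = a * a * (\<Sum>u\<in>UNIV. \<Sum>w\<in>UNIV. ?\<Phi> u w * ?\<Phi> u w)
       + a * c * (\<Sum>u\<in>UNIV. \<Sum>w\<in>UNIV. ?\<Phi> u w * ptrace2 \<sigma>2 u w)
       + a * c * (\<Sum>u\<in>UNIV. \<Sum>w\<in>UNIV. ?\<Phi> u w * ptrace2 \<sigma>1 u w)
       + c * c * (\<Sum>u\<in>UNIV. \<Sum>w\<in>UNIV. ptrace2 \<sigma>1 u w * ptrace2 \<sigma>2 u w)"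
    by (simp add: sum.distrib sum_distrib_left algebra_simps)
  moreover have "(\<Sum>u\<in>UNIV. \<Sum>w\<in>UNIV. ?\<Phi> u w * ?\<Phi> u w) = 1 / 2"
    using sum_ptrace2_proj_bell_00_mult trace_op_proj_bell_00 by simp
  ultimately show ?thesis
    unfolding swap_prob_00_eq ptrace2_lincomb sum_ptrace2_proj_bell_00_mult
    by (simp add: algebra_simps)
qed

lemma swap_num_00_phi_mixture:
  "swap_num 0 0 (phi_mixture p \<sigma>1) (phi_mixture p \<sigma>2)
   = of_real (p\<^sup>2 / 4)
     + of_real (p / 4) * (of_real (1 - p) * expval \<sigma>1 (bell 0 0) + of_real (1 - p) * expval \<sigma>2 (bell 0 0))
     + of_real ((1 - p)\<^sup>2) * swap_num 0 0 \<sigma>1 \<sigma>2"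
  unfolding phi_mixture_def swap_num_00_bell_00_lincomb by (simp add: field_simps power2_eq_square)

lemma swap_prob_00_phi_mixture:
  "swap_prob 0 0 (phi_mixture p \<sigma>1) (phi_mixture p \<sigma>2)
   = of_real (p\<^sup>2 / 4) + of_real (p * (1 - p) / 4) * (trace_op \<sigma>1 + trace_op \<sigma>2)
     + of_real ((1 - p)\<^sup>2) * swap_prob 0 0 \<sigma>1 \<sigma>2"
  unfolding phi_mixture_def swap_prob_00_bell_00_lincomb
  by (simp add: algebra_simps power2_eq_square)

lemma swap_num_le_fidelity_bound_mult_prob:
  fixes p F q n :: real
  assumes "0 \<le> p" "p \<le> F" "F \<le> 1" "0 \<le> n" "n \<le> q" "n \<le> 1 / 4"
  shows "p\<^sup>2 / 4 + p * (F - p) / 2 + (1 - p)\<^sup>2 * n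
    \<le> (1 - 2 * p * (1 - F)) * (p\<^sup>2 / 4 + p * (1 - p) / 2 + (1 - p)\<^sup>2 * q)"
proof -
  have gap: "(1 - 2 * p * (1 - F)) * (p\<^sup>2 / 4 + p * (1 - p) / 2 + (1 - p)\<^sup>2 * q)
      - (p\<^sup>2 / 4 + p * (F - p) / 2 + (1 - p)\<^sup>2 * n)
      = (1 - p)\<^sup>2 * ((q - n) + p * (1 - F) * (1 / 2 - 2 * q))"
    by (simp add: field_simps power2_eq_square)
  have "p * (1 - F) \<le> F * (1 - F)"
    using assms by (intro mult_right_mono) auto
  also have "\<dots> \<le> 1 / 4"
    using sum_squares_ge_zero[of "F - 1 / 2" 0] by (simp add: power2_eq_square algebra_simps)
  finally have "p * (1 - F) \<le> 1 / 4" .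
  moreover have "0 \<le> p * (1 - F)"
    using assms by simp
  ultimately have "0 \<le> (q - n) + p * (1 - F) * (1 / 2 - 2 * q)"
  proof (cases "q \<le> 1 / 4")
    case True
    with \<open>0 \<le> p * (1 - F)\<close> have "0 \<le> p * (1 - F) * (1 / 2 - 2 * q)"
      by simp
    with assms show ?thesis by linarith
  next
    case False
    with \<open>p * (1 - F) \<le> 1 / 4\<close> have "1 / 4 * (1 / 2 - 2 * q) \<le> p * (1 - F) * (1 / 2 - 2 * q)"
      by (intro mult_right_mono_neg) auto
    with assms False show ?thesis by argo
  qed
  then have "0 \<le> (1 - p)\<^sup>2 * ((q - n) + p * (1 - F) * (1 / 2 - 2 * q))"
    by simp
  with gap show ?thesis by linarith
qed

lemma S_set_phi_mixtureE:
  assumes "\<rho> \<in> S_set p F"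
  obtains \<sigma> where "density_op \<sigma>" "\<rho> = phi_mixture p \<sigma>"
    and "of_real (1 - p) * expval \<sigma> (bell 0 0) = of_real (F - p)"
proof -
  from assms obtain \<sigma> where \<sigma>: "density_op \<sigma>" "\<rho> = phi_mixture p \<sigma>"
    and "expval \<rho> (bell 0 0) = of_real F"
    unfolding S_set_def phi_mixture_def by blast
  then have "of_real p + of_real (1 - p) * expval \<sigma> (bell 0 0) = of_real F"
    by (simp only: expval_phi_mixture)
  then have "of_real (1 - p) * expval \<sigma> (bell 0 0) = of_real (F - p)"
    unfolding of_real_diff[of F p] by (metis add.commute eq_diff_eq)
  with \<sigma> show thesis by (rule that)
qed

lemma swap_00_S_set:
  assumes "\<rho>1 \<in> S_set p F" "\<rho>2 \<in> S_set p F"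
  obtains q n where "swap_prob 0 0 \<rho>1 \<rho>2 = of_real (p\<^sup>2 / 4 + p * (1 - p) / 2 + (1 - p)\<^sup>2 * q)"
    and "swap_num 0 0 \<rho>1 \<rho>2 = of_real (p\<^sup>2 / 4 + p * (F - p) / 2 + (1 - p)\<^sup>2 * n)"
    and "0 \<le> n" "n \<le> q" "n \<le> 1 / 4"
proof -
  obtain \<sigma>1 where \<sigma>1: "density_op \<sigma>1" "\<rho>1 = phi_mixture p \<sigma>1"
    "of_real (1 - p) * expval \<sigma>1 (bell 0 0) = of_real (F - p)"
    using assms(1) by (rule S_set_phi_mixtureE)
  obtain \<sigma>2 where \<sigma>2: "density_op \<sigma>2" "\<rho>2 = phi_mixture p \<sigma>2"
    "of_real (1 - p) * expval \<sigma>2 (bell 0 0) = of_real (F - p)"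
    using assms(2) by (rule S_set_phi_mixtureE)
  obtain q n where qn: "swap_prob 0 0 \<sigma>1 \<sigma>2 = of_real q" "swap_num 0 0 \<sigma>1 \<sigma>2 = of_real n"
    and "0 \<le> n" "n \<le> q" "n \<le> 1 / 4"
    using swap_00_density_bounds[OF \<sigma>1(1) \<sigma>2(1)] by blast
  moreover have "trace_op \<sigma>1 = 1" "trace_op \<sigma>2 = 1"
    using \<sigma>1(1) \<sigma>2(1) by (simp_all add: density_op_def)
  moreover have "swap_num 0 0 \<rho>1 \<rho>2 = of_real (p\<^sup>2 / 4 + p * (F - p) / 2 + (1 - p)\<^sup>2 * n)"
    unfolding \<sigma>1(2) \<sigma>2(2) swap_num_00_phi_mixture \<sigma>1(3) \<sigma>2(3) qn(2)
    by (simp add: field_simps power2_eq_square)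
  moreover have "swap_prob 0 0 \<rho>1 \<rho>2 = of_real (p\<^sup>2 / 4 + p * (1 - p) / 2 + (1 - p)\<^sup>2 * q)"
    unfolding \<sigma>1(2) \<sigma>2(2) swap_prob_00_phi_mixture \<open>trace_op \<sigma>1 = 1\<close> \<open>trace_op \<sigma>2 = 1\<close> qn(1)
    by (simp add: field_simps power2_eq_square)
  ultimately show thesis
    using that by blast
qed

lemma swap_fid_00_S_set_le:
  assumes "0 \<le> p" "p \<le> F" "F \<le> 1" "\<rho>1 \<in> S_set p F" "\<rho>2 \<in> S_set p F"
    and "swap_prob 0 0 \<rho>1 \<rho>2 \<noteq> 0"
  shows "swap_fid 0 0 \<rho>1 \<rho>2 \<in> \<real> \<and> Re (swap_fid 0 0 \<rho>1 \<rho>2) \<le> 1 - 2 * p * (1 - F)"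
proof -
  obtain q n where P: "swap_prob 0 0 \<rho>1 \<rho>2 = of_real (p\<^sup>2 / 4 + p * (1 - p) / 2 + (1 - p)\<^sup>2 * q)"
    and N: "swap_num 0 0 \<rho>1 \<rho>2 = of_real (p\<^sup>2 / 4 + p * (F - p) / 2 + (1 - p)\<^sup>2 * n)"
    and qn: "0 \<le> n" "n \<le> q" "n \<le> 1 / 4"
    using swap_00_S_set[OF assms(4,5)] by blast
  have "0 \<le> p\<^sup>2 / 4 + p * (1 - p) / 2 + (1 - p)\<^sup>2 * q"
    using assms(1-3) qn by (intro add_nonneg_nonneg mult_nonneg_nonneg) auto
  moreover have "p\<^sup>2 / 4 + p * (1 - p) / 2 + (1 - p)\<^sup>2 * q \<noteq> 0"
    using assms(6) unfolding P of_real_eq_0_iff .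
  ultimately have "0 < p\<^sup>2 / 4 + p * (1 - p) / 2 + (1 - p)\<^sup>2 * q"
    by linarith
  then show ?thesis
    using swap_num_le_fidelity_bound_mult_prob[OF assms(1-3) qn]
    unfolding swap_fid_def P N by (simp add: pos_divide_le_eq flip: of_real_divide)
qed

lemma bell_superposition_apply:
  "of_real a * bell 0 0 (r, s) + of_real b * bell 1 1 (r, s)
   = of_real (if r = s then a / sqrt 2 else if r then - b / sqrt 2 else b / sqrt 2)"
  by (simp add: bell_def XZpow_def mmult2_def pauli_X_def pauli_Z_def id2_def phi_plus_def
      UNIV_bool)

lemma proj_bell_superposition:
  fixes a b :: real
  assumes "a\<^sup>2 + b\<^sup>2 = 1"
  defines "\<psi> \<equiv> \<lambda>x. of_real a * bell 0 0 x + of_real b * bell 1 1 x"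
  shows "density_op (proj \<psi>)" "expval (proj \<psi>) (bell 0 0) = of_real (a\<^sup>2)"
    and "swap_num 0 0 (proj \<psi>) (proj \<psi>) = 1 / 4" "swap_prob 0 0 (proj \<psi>) (proj \<psi>) = 1 / 4"
proof -
  have \<psi>: "\<psi> (r, s) = of_real (if r = s then a / sqrt 2 else if r then - b / sqrt 2 else b / sqrt 2)"
    for r s
    unfolding \<psi>_def by (rule bell_superposition_apply)
  have "(\<Sum>x\<in>UNIV. (cmod (\<psi> x))\<^sup>2) = 1"
    using assms(1) by (simp add: UNIV_bool UNIV_Times_UNIV[symmetric] \<psi> norm_divide power_divide)
  then show "density_op (proj \<psi>)"
    unfolding density_op_def trace_op_proj using psd_proj by simp
  show "expval (proj \<psi>) (bell 0 0) = of_real (a\<^sup>2)"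
    unfolding expval_proj
    by (simp add: UNIV_bool UNIV_Times_UNIV[symmetric] \<psi> bell_00_apply flip: of_real_mult)
  have half: "(a / sqrt 2) * (a / sqrt 2) + (b / sqrt 2) * (b / sqrt 2) = 1 / 2"
    using assms(1) by (simp add: power2_eq_square field_simps)
  have M: "(\<Sum>r\<in>UNIV. \<psi> (r, s) * \<psi> (r, s')) = (if s = s' then 1 / 2 else 0)" for s s'
    using half
    by (cases s; cases s') (simp_all add: UNIV_bool \<psi> algebra_simps flip: of_real_mult of_real_add)
  have "(\<Sum>x\<in>UNIV. \<psi> x * \<psi> x) = 1"
    unfolding sum_UNIV_pair[of "\<lambda>x. \<psi> x * \<psi> x"] M by (simp add: UNIV_bool)
  then show "swap_num 0 0 (proj \<psi>) (proj \<psi>) = 1 / 4"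
    unfolding swap_num_00_proj by simp
  show "swap_prob 0 0 (proj \<psi>) (proj \<psi>) = 1 / 4"
    unfolding swap_prob_00_proj M by (simp add: UNIV_bool power2_eq_square)
qed

lemma phi_mixture_opt:
  fixes p F :: real
  assumes "0 \<le> p" "p \<le> F" "F \<le> 1"
  defines "Ft \<equiv> (F - p) / (1 - p)"
  defines "\<psi> \<equiv> \<lambda>x. of_real (sqrt Ft) * bell 0 0 x + of_real (sqrt (1 - Ft)) * bell 1 1 x"
  defines "\<rho> \<equiv> phi_mixture p (proj \<psi>)"
  shows "\<rho> \<in> S_set p F"
    and "swap_prob 0 0 \<rho> \<rho> = 1 / 4"
    and "swap_fid 0 0 \<rho> \<rho> = of_real (1 - 2 * p * (1 - F))"
proof -
  \<comment> \<open>For p = 1 the division by zero makes Ft = 0; then F = 1 and the state is just \<Phi>.\<close>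
  have Ft: "0 \<le> Ft" "Ft \<le> 1" "(1 - p) * Ft = F - p"
    using assms(1-3) unfolding Ft_def by (cases "p = 1"; simp add: divide_le_eq)+
  then have "(sqrt Ft)\<^sup>2 + (sqrt (1 - Ft))\<^sup>2 = 1"
    by simp
  note \<psi> = proj_bell_superposition[OF this, folded \<psi>_def]
  have "(1 - p) * (sqrt Ft)\<^sup>2 = F - p"
    using Ft by simp
  then have ev: "of_real (1 - p) * expval (proj \<psi>) (bell 0 0) = of_real (F - p)"
    by (simp only: \<psi>(2) of_real_mult[symmetric])
  have tr: "trace_op (proj \<psi>) = 1"
    using \<psi>(1) by (simp add: density_op_def)
  have "density_op \<rho>"
    unfolding \<rho>_def density_op_def trace_op_phi_mixture tr
    using psd_phi_mixture[of "proj \<psi>" p] \<psi>(1) assms(1-3) by (simp add: density_op_def)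
  moreover have "expval \<rho> (bell 0 0) = of_real F"
    unfolding \<rho>_def expval_phi_mixture ev by simp
  ultimately show "\<rho> \<in> S_set p F"
    unfolding S_set_def using \<psi>(1) by (auto simp: \<rho>_def phi_mixture_def)
  show P: "swap_prob 0 0 \<rho> \<rho> = 1 / 4"
    unfolding \<rho>_def swap_prob_00_phi_mixture tr \<psi>(4) by (simp add: field_simps power2_eq_square)
  have "swap_num 0 0 \<rho> \<rho> = of_real ((p\<^sup>2 + 2 * p * (F - p) + (1 - p)\<^sup>2) / 4)"
    unfolding \<rho>_def swap_num_00_phi_mixture ev \<psi>(3) by (simp add: field_simps power2_eq_square)
  then show "swap_fid 0 0 \<rho> \<rho> = of_real (1 - 2 * p * (1 - F))"
    unfolding swap_fid_def P by (simp add: field_simps power2_eq_square)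
qed

theorem theorem3:
  fixes p F :: real
  assumes "0 \<le> F" and "F \<le> 1" and "0 \<le> p" and "p \<le> F"
  shows "(\<forall>\<rho>1\<in>S_set p F. \<forall>\<rho>2\<in>S_set p F. swap_prob 0 0 \<rho>1 \<rho>2 \<noteq> 0 \<longrightarrow>
             swap_fid 0 0 \<rho>1 \<rho>2 \<in> \<real> \<and> Re (swap_fid 0 0 \<rho>1 \<rho>2) \<le> 1 - 2 * p * (1 - F))
       \<and> (\<exists>\<rho>1\<in>S_set p F. \<exists>\<rho>2\<in>S_set p F. swap_prob 0 0 \<rho>1 \<rho>2 \<noteq> 0 \<and>
             swap_fid 0 0 \<rho>1 \<rho>2 = complex_of_real (1 - 2 * p * (1 - F)))
       \<and> (p < 1 \<longrightarrow>
            (let Ft = (F - p) / (1 - p);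
                 \<psi> = (\<lambda>x. complex_of_real (sqrt Ft) * bell 0 0 x
                          + complex_of_real (sqrt (1 - Ft)) * bell 1 1 x);
                 \<rho>opt = (\<lambda>x y. complex_of_real p * proj (bell 0 0) x y
                          + complex_of_real (1 - p) * proj \<psi> x y)
             in \<rho>opt \<in> S_set p F \<and> swap_prob 0 0 \<rho>opt \<rho>opt \<noteq> 0 \<and>
                swap_fid 0 0 \<rho>opt \<rho>opt = complex_of_real (1 - 2 * p * (1 - F))))"
proof -
  note opt = phi_mixture_opt[OF assms(3,4,2)]
  have "\<exists>\<rho>\<in>S_set p F. swap_prob 0 0 \<rho> \<rho> \<noteq> 0 \<and> swap_fid 0 0 \<rho> \<rho> = of_real (1 - 2 * p * (1 - F))"
    by (rule bexI[OF _ opt(1)]) (unfold opt(2,3), simp)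
  then show ?thesis
    unfolding Let_def phi_mixture_def[symmetric] opt(2,3)
    using swap_fid_00_S_set_le[OF assms(3,4,2)] opt(1) by auto
qed

end
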